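(* Let $m\in\mathbb{Z}$, $p,q\in\{1,\dots,2n\}$, and assume $m+(p-n)_+\ge 1+(q-n)_+$, where $x_+=\max(x,0)$. Let $M_1\in M_p(m)$ and $M_2\in M_q(1)$. If $M_1\cdot M_2$ is a highest weight vector, then \[ M_1=\begin{cases}Y_p(m) & \text{if } p\in\{1,\dots,n\},\\ Y_{2n-p}(m-n+p) & \text{if } p\in\{n+1,\dots,2n\}.\end{cases} \]
   Context: Fix $n\ge 2$ and type $C_n$ with $I=\{1,\dots,n\}$. Let $\mathcal{M}$ be the set of Laurent monomials $M=\prod_{i\in I,k\in\mathbb{Z}}Y_i(k)^{y_i(k)}$ ($y_i(k)\in\mathbb{Z}$, finitely many nonzero); put $Y_0(k)=Y_{n+1}(k)=1$. For $i\in I$ put $\varepsilon_i(M)=\max_k(-\sum_{j>k}y_i(j))$; $M$ is a highest weight vector if $\varepsilon_i(M)=0$ for all $i\in I$ (equivalently all Kashiwara operators $\tilde e_i$ of Nakajima's monomial crystal kill $M$). The $X$-variables are $X_i(k)=Y_i(k)Y_{i-1}(k+1)^{-1}$ and $X_{\bar i}(k)=Y_{i-1}(k+n-i+1)Y_i(k+n-i+1)^{-1}$ for $1\le i\le n$, $k\in\mathbb{Z}$. The alphabet $\mathcal{I}=\{1,\dots,n,\bar n,\dots,\bar 1\}$ is ordered $1<\cdots<n<\bar n<\cdots<\bar 1$. For $1\le k\le 2n$, $m\in\mathbb{Z}$: $M_k(m)=\{X_{i_1}(k+m-1)X_{i_2}(k+m-2)\cdots X_{i_k}(m): i_j\in\mathcal{I},\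 i_1<\cdots<i_k\}$. (The quantity $m+(p-n)_+$ is called the height of a monomial of $M_p(m)$.) *)

theory Defs
  imports Main
begin

text \<open>Laurent monomials in the variables Y_i(k), i in I = {1..n}, k in Z, are represented
  by their exponent functions  y :: nat => int => int  (y i k = exponent of Y_i(k)).
  Exponents at indices i outside {1..n} are always 0 for the monomials we build
  (this encodes Y_0(k) = Y_{n+1}(k) = 1).\<close>

type_synonym monomial = "nat \<Rightarrow> int \<Rightarrow> int"

definition mono_one :: monomial where
  "mono_one = (\<lambda>i k. 0)"

definition mono_mult :: "monomial \<Rightarrow> monomial \<Rightarrow> monomial" where
  "mono_mult M N = (\<lambda>i k. M i k + N i k)"

definition mono_inv :: "monomial \<Rightarrow> monomial" where
  "mono_inv M = (\<lambda>i k. - M i k)"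

definition Y :: "nat \<Rightarrow> nat \<Rightarrow> int \<Rightarrow> monomial" where
  "Y n i k = (\<lambda>j l. if j = i \<and> l = k \<and> 1 \<le> i \<and> i \<le> n then 1 else 0)"

definition eps :: "monomial \<Rightarrow> nat \<Rightarrow> int" where
  "eps M i = Max (range (\<lambda>k. - (\<Sum>j\<in>{j. k < j \<and> M i j \<noteq> 0}. M i j)))"

definition highest_weight :: "nat \<Rightarrow> monomial \<Rightarrow> bool" where
  "highest_weight n M \<longleftrightarrow> (\<forall>i\<in>{1..n}. eps M i = 0)"

text \<open>The alphabet {1<...<n<bar n<...<bar 1} is encoded by {1..2n} with its natural order:
  letter a \<le> n stands for a, letter a > n stands for bar(2n+1-a).\<close>
definition X :: "nat \<Rightarrow> nat \<Rightarrow> int \<Rightarrow> monomial" where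
  "X n a k =
     (if a \<le> n then mono_mult (Y n a k) (mono_inv (Y n (a - 1) (k + 1)))
      else (let i = 2 * n + 1 - a in
            mono_mult (Y n (i - 1) (k + int n - int i + 1)) (mono_inv (Y n i (k + int n - int i + 1)))))"

definition Mset :: "nat \<Rightarrow> nat \<Rightarrow> int \<Rightarrow> monomial set" where
  "Mset n k m = {(\<lambda>i l. \<Sum>j\<in>{1..k}. X n (a j) (int k + m - int j) i l) | a.
       strict_mono_on {1..k} a \<and> (\<forall>j\<in>{1..k}. a j \<in> {1..2*n})}"

end

theory Submission
  imports Defs "HOL-Library.Product_Lexorder"
begin

text \<open>
  A monomial of M_p(m) is X_{a_1}(p+m-1) ... X_{a_p}(m) with a_j \<ge> j. Raising each letter from j
  to a_j one step at a time writes it as the top monomial (all a_j = j, where the product telescopes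
  to the single variable Y_p(m), resp. Y_{2n-p}(m-n+p), sitting at the height) times factors
  X_{w+1}(t) X_w(t)^{-1}. Each such factor has exponent -1 at its lexicographically last variable
  Y_i(k) (largest k, then largest i) and nothing beyond it. Leading negative exponents of this kind
  survive in products, so if M_1 is not the top monomial, M_1 M_2 / (top_1 top_2) has one at a time
  beyond both heights; multiplying back by the two top monomials does not affect it, and a negative
  exponent of Y_i(K) with no Y_i(l) for l > K forces \<epsilon>_i > 0.
\<close>

lemma strict_mono_on_ge_index:
  fixes a :: "nat \<Rightarrow> nat"
  assumes "strict_mono_on {1..p} a" "1 \<le> a 1" "j \<in> {1..p}"
  shows "j \<le> a j"
proof -
  have "1 \<le> j" "j \<le> p" using assms(3) by auto
  then show ?thesis
  proof (induction j rule: nat_induct_at_least)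
    case base
    then show ?case using assms(2) by simp
  next
    case (Suc j)
    then have "a j < a (Suc j)"
      by (intro strict_mono_onD[OF assms(1)]) auto
    then show ?case using Suc by simp
  qed
qed

lemma mono_mult_apply [simp]: "mono_mult M N i l = M i l + N i l"
  by (simp add: mono_mult_def)

lemma mono_inv_apply [simp]: "mono_inv M i l = - M i l"
  by (simp add: mono_inv_def)

lemma X_eq_Y_low: "a \<le> n \<Longrightarrow> X n a k i l = Y n a k i l - Y n (a - 1) (k + 1) i l"
  by (simp add: X_def)

lemma X_eq_Y_high:
  assumes "n < a" "a \<le> 2*n"
  shows "X n a k i l = Y n (2*n - a) (k + int a - int n) i l - Y n (2*n + 1 - a) (k + int a - int n) i l"
proof -
  have "2*n + 1 - a - 1 = 2*n - a" by simp
  moreover have "k + int n - int (2*n + 1 - a) + 1 = k + int a - int n"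
    using assms by (simp add: of_nat_diff)
  ultimately show ?thesis
    using assms by (simp add: X_def Let_def algebra_simps)
qed

lemma X_eq_zero_outside_rows: "i \<notin> {1..n} \<Longrightarrow> X n a k i l = 0"
  by (auto simp: X_def Let_def Y_def)

lemma X_eq_zero_before: "l < k \<Longrightarrow> X n a k i l = 0"
  by (auto simp: X_def Let_def Y_def)

definition height :: "nat \<Rightarrow> nat \<Rightarrow> int \<Rightarrow> int" where
  "height n p m = m + max (int p - int n) 0"

definition top_monomial :: "nat \<Rightarrow> nat \<Rightarrow> int \<Rightarrow> monomial" where
  "top_monomial n p m = (if p \<le> n then Y n p m else Y n (2*n - p) (m - int n + int p))"

lemma top_monomial_eq_zero: "l \<noteq> height n p m \<Longrightarrow> top_monomial n p m i l = 0"
  by (auto simp: top_monomial_def height_def Y_def)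

definition Xprod :: "nat \<Rightarrow> nat \<Rightarrow> int \<Rightarrow> (nat \<Rightarrow> nat) \<Rightarrow> monomial" where
  "Xprod n p m a = (\<lambda>i l. \<Sum>j\<in>{1..p}. X n (a j) (int p + m - int j) i l)"

lemma Mset_iff:
  "M \<in> Mset n p m \<longleftrightarrow>
     (\<exists>a. M = Xprod n p m a \<and> strict_mono_on {1..p} a \<and> (\<forall>j\<in>{1..p}. a j \<in> {1..2*n}))"
  by (auto simp: Mset_def Xprod_def)

lemma Mset_eq_zero_outside_rows: "M \<in> Mset n p m \<Longrightarrow> i \<notin> {1..n} \<Longrightarrow> M i l = 0"
  by (auto simp: Mset_def X_eq_zero_outside_rows)

lemma Mset_eq_zero_before: "M \<in> Mset n p m \<Longrightarrow> l < m \<Longrightarrow> M i l = 0"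
  by (auto simp: Mset_def X_eq_zero_before intro!: sum.neutral)

lemma top_monomial_mult_X:
  assumes "Suc p \<le> 2*n"
  shows "top_monomial n p (m + 1) i l + X n (Suc p) m i l = top_monomial n (Suc p) m i l"
proof -
  consider "Suc p \<le> n" | "p = n" | "n < p"
    by linarith
  then show ?thesis
  proof cases
    case 1
    then show ?thesis by (simp add: top_monomial_def X_eq_Y_low)
  next
    case 2
    then show ?thesis using assms by (simp add: top_monomial_def X_eq_Y_low X_eq_Y_high)
  next
    case 3
    then show ?thesis using assms by (simp add: top_monomial_def X_eq_Y_high algebra_simps)
  qed
qed

lemma Xprod_id: "p \<le> 2*n \<Longrightarrow> Xprod n p m (\<lambda>j. j) = top_monomial n p m"
proof (induction p arbitrary: m)
  case 0
  then show ?case by (simp add: Xprod_def top_monomial_def Y_def)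
next
  case (Suc p)
  have "Xprod n (Suc p) m (\<lambda>j. j) i l = Xprod n p (m + 1) (\<lambda>j. j) i l + X n (Suc p) m i l" for i l
    by (simp add: Xprod_def algebra_simps)
  also have "\<dots> i l = top_monomial n (Suc p) m i l" for i l
    using Suc top_monomial_mult_X by simp
  finally show ?case by blast
qed

definition X_step :: "nat \<Rightarrow> nat \<Rightarrow> int \<Rightarrow> monomial" where
  "X_step n w t = mono_mult (X n (Suc w) t) (mono_inv (X n w t))"

definition step_lead :: "nat \<Rightarrow> nat \<Rightarrow> int \<Rightarrow> int \<times> nat" where
  "step_lead n w t = (t + 1 + int (w - n), min w (2*n - w))"

text \<open>Positions (k, i) of the variables Y_i(k) are ordered lexicographically, time first.\<close>

definition negative_lead :: "monomial \<Rightarrow> int \<times> nat \<Rightarrow> bool" where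
  "negative_lead P L \<longleftrightarrow> P (snd L) (fst L) < 0 \<and> (\<forall>l i. L < (l, i) \<longrightarrow> P i l = 0)"

lemma X_step_negative_lead:
  assumes "1 \<le> w" "w < 2*n"
  shows "negative_lead (X_step n w t) (step_lead n w t)"
proof -
  consider "w < n" | "w = n" | "n < w"
    by linarith
  then show ?thesis
  proof cases
    case 1
    then show ?thesis using assms
      by (auto simp: negative_lead_def X_step_def step_lead_def X_eq_Y_low Y_def)
  next
    case 2
    then show ?thesis using assms
      by (auto simp: negative_lead_def X_step_def step_lead_def X_eq_Y_low X_eq_Y_high Y_def)
  next
    case 3
    then show ?thesis using assms
      by (auto simp: negative_lead_def X_step_def step_lead_def X_eq_Y_high Y_def)
  qed
qed

lemma negative_lead_mult:
  assumes "negative_lead P L" "negative_lead Q L'"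
  shows "negative_lead (mono_mult P Q) (max L L')"
  using assms less_linear[of L L'] unfolding negative_lead_def
  by (auto simp: max_def prod_eq_iff)

lemma negative_lead_mult_vanishing:
  assumes "negative_lead P L" "\<And>i l. fst L \<le> l \<Longrightarrow> Q i l = 0"
  shows "negative_lead (mono_mult P Q) L"
  using assms unfolding negative_lead_def by (auto simp: less_prod_def)

lemma negative_lead_sum:
  assumes "finite F" "F \<noteq> {}" "\<And>x. x \<in> F \<Longrightarrow> negative_lead (f x) (L x)"
  shows "negative_lead (\<lambda>i l. \<Sum>x\<in>F. f x i l) (Max (L ` F))"
  using assms
proof (induction F rule: finite_ne_induct)
  case (singleton x)
  then show ?case by simp
next
  case (insert x F)
  have "(\<lambda>i l. \<Sum>y\<in>insert x F. f y i l) = mono_mult (f x) (\<lambda>i l. \<Sum>y\<in>F. f y i l)"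
    using insert.hyps by (simp add: fun_eq_iff)
  moreover have "Max (L ` insert x F) = max (L x) (Max (L ` F))"
    using insert.hyps by simp
  ultimately show ?case
    using insert negative_lead_mult by simp
qed

lemma X_telescope:
  assumes "j \<le> a"
  shows "X n a t i l = X n j t i l + (\<Sum>w\<in>{j..<a}. X_step n w t i l)"
  using sum_Suc_diff'[OF assms, of "\<lambda>v. X n v t i l"] by (simp add: X_step_def)

lemma Xprod_over_top:
  assumes "\<forall>j\<in>{1..p}. j \<le> a j" "p \<le> 2*n"
  shows "mono_mult (Xprod n p m a) (mono_inv (top_monomial n p m)) =
    (\<lambda>i l. \<Sum>x\<in>(SIGMA j:{1..p}. {j..<a j}). X_step n (snd x) (int p + m - int (fst x)) i l)"
proof (intro ext)
  fix i l
  have "Xprod n p m a i l =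
      Xprod n p m (\<lambda>j. j) i l + (\<Sum>j\<in>{1..p}. \<Sum>w\<in>{j..<a j}. X_step n w (int p + m - int j) i l)"
    unfolding Xprod_def sum.distrib[symmetric] using assms(1) X_telescope by (intro sum.cong) auto
  then show "mono_mult (Xprod n p m a) (mono_inv (top_monomial n p m)) i l =
      (\<Sum>x\<in>(SIGMA j:{1..p}. {j..<a j}). X_step n (snd x) (int p + m - int (fst x)) i l)"
    using Xprod_id[OF assms(2)] by (simp add: sum.Sigma case_prod_beta)
qed

lemma Xprod_over_top_negative_lead:
  assumes a_ge: "\<forall>j\<in>{1..p}. j \<le> a j" and a_le: "\<forall>j\<in>{1..p}. a j \<le> 2*n" and "p \<le> 2*n"
    and j0: "j0 \<in> {1..p}" "j0 < a j0"
  shows "\<exists>L. negative_lead (mono_mult (Xprod n p m a) (mono_inv (top_monomial n p m))) L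
    \<and> height n p m < fst L"
proof -
  define F where "F = (SIGMA j:{1..p}. {j..<a j})"
  have j0_F: "(j0, j0) \<in> F" using j0 by (simp add: F_def)
  define lead where "lead = (\<lambda>x. step_lead n (snd x) (int p + m - int (fst x)))"
  have "negative_lead (mono_mult (Xprod n p m a) (mono_inv (top_monomial n p m))) (Max (lead ` F))"
    unfolding Xprod_over_top[OF a_ge assms(3)] F_def[symmetric] lead_def
  proof (rule negative_lead_sum)
    show "finite F" by (simp add: F_def)
    show "F \<noteq> {}" using j0_F by blast
    fix x
    assume "x \<in> F"
    then show "negative_lead (X_step n (snd x) (int p + m - int (fst x)))
        (step_lead n (snd x) (int p + m - int (fst x)))"
      using a_le by (intro X_step_negative_lead) (auto simp: F_def)
  qed
  moreover have "height n p m < fst (Max (lead ` F))"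
  proof -
    have "lead (j0, j0) \<le> Max (lead ` F)"
      using j0_F by (intro Max_ge) (auto simp: F_def)
    then have "fst (lead (j0, j0)) \<le> fst (Max (lead ` F))"
      by (auto simp: less_eq_prod_def)
    moreover have "height n p m < fst (lead (j0, j0))"
      using j0 by (auto simp: lead_def step_lead_def height_def)
    ultimately show ?thesis by simp
  qed
  ultimately show ?thesis by blast
qed

lemma Mset_over_top_negative_lead:
  assumes "M \<in> Mset n p m" "p \<le> 2*n" "M \<noteq> top_monomial n p m"
  shows "\<exists>L. negative_lead (mono_mult M (mono_inv (top_monomial n p m))) L \<and> height n p m < fst L"
proof -
  obtain a where M: "M = Xprod n p m a" and a_mono: "strict_mono_on {1..p} a"
    and a_range: "\<forall>j\<in>{1..p}. a j \<in> {1..2*n}"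
    using assms(1) unfolding Mset_iff by blast
  have a_ge: "\<forall>j\<in>{1..p}. j \<le> a j"
  proof
    fix j
    assume j: "j \<in> {1..p}"
    then have "1 \<le> a 1" using a_range by auto
    then show "j \<le> a j" using j by (rule strict_mono_on_ge_index[OF a_mono])
  qed
  have "\<not> (\<forall>j\<in>{1..p}. a j = j)"
  proof
    assume "\<forall>j\<in>{1..p}. a j = j"
    then have "M = Xprod n p m (\<lambda>j. j)"
      unfolding M Xprod_def by (intro ext sum.cong) auto
    then show False
      using assms(3) Xprod_id[OF assms(2)] by simp
  qed
  then obtain j0 where j0: "j0 \<in> {1..p}" "a j0 \<noteq> j0"
    by blast
  with a_ge have "j0 < a j0"
    by force
  moreover have "\<forall>j\<in>{1..p}. a j \<le> 2*n"
    using a_range by simp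
  ultimately show ?thesis
    unfolding M using Xprod_over_top_negative_lead[OF a_ge _ assms(2) j0(1)] by blast
qed

lemma Mset_mult_negative_lead:
  assumes "M1 \<in> Mset n p m" "M2 \<in> Mset n q m'" "p \<le> 2*n" "q \<le> 2*n"
    and "height n q m' \<le> height n p m" "M1 \<noteq> top_monomial n p m"
  shows "\<exists>L. negative_lead (mono_mult M1 M2) L"
proof -
  define T1 where "T1 = top_monomial n p m"
  define T2 where "T2 = top_monomial n q m'"
  define Q1 where "Q1 = mono_mult M1 (mono_inv T1)"
  define Q2 where "Q2 = mono_mult M2 (mono_inv T2)"
  obtain L1 where L1: "negative_lead Q1 L1" "height n p m < fst L1"
    using Mset_over_top_negative_lead[OF assms(1,3,6)] unfolding Q1_def T1_def by blast
  have "\<exists>L. negative_lead (mono_mult Q1 Q2) L \<and> height n p m < fst L"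
  proof (cases "M2 = T2")
    case True
    then have "negative_lead (mono_mult Q1 Q2) L1"
      by (intro negative_lead_mult_vanishing[OF L1(1)]) (simp add: Q2_def)
    then show ?thesis
      using L1(2) by blast
  next
    case False
    then obtain L2 where "negative_lead Q2 L2"
      using Mset_over_top_negative_lead[OF assms(2,4)] unfolding Q2_def T2_def by blast
    then show ?thesis
      using L1 negative_lead_mult by (fastforce simp: less_eq_prod_def max_def)
  qed
  then obtain L where L: "negative_lead (mono_mult Q1 Q2) L" and "height n p m < fst L"
    by blast
  then have "T1 i l + T2 i l = 0" if "fst L \<le> l" for i l
    using that assms(5) by (simp add: T1_def T2_def top_monomial_eq_zero)
  then have "negative_lead (mono_mult (mono_mult Q1 Q2) (mono_mult T1 T2)) L"
    by (intro negative_lead_mult_vanishing[OF L]) simp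
  moreover have "mono_mult (mono_mult Q1 Q2) (mono_mult T1 T2) = mono_mult M1 M2"
    by (simp add: Q1_def Q2_def fun_eq_iff)
  ultimately show ?thesis by metis
qed

lemma eps_pos_if_negative_lead:
  assumes lead: "negative_lead P (K, i)" and bounded: "\<And>l. l < lo \<Longrightarrow> P i l = 0"
  shows "0 < eps P i"
proof -
  define f where "f = (\<lambda>k. - (\<Sum>j\<in>{j. k < j \<and> P i j \<noteq> 0}. P i j))"
  have supp: "{j. k < j \<and> P i j \<noteq> 0} \<subseteq> {lo..K}" for k
    using lead bounded by (force simp: negative_lead_def not_le)
  have "range f \<subseteq> (\<lambda>B. - sum (P i) B) ` Pow {lo..K}"
    unfolding f_def using supp by blast
  then have "finite (range f)"
    by (rule finite_subset) simp
  moreover have "j = K" if "K - 1 < j" "P i j \<noteq> 0" for j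
  proof -
    have "\<not> K < j" using lead that(2) by (auto simp: negative_lead_def)
    then show ?thesis using that(1) by linarith
  qed
  then have "{j. K - 1 < j \<and> P i j \<noteq> 0} = {K}"
    using lead by (auto simp: negative_lead_def)
  then have "0 < f (K - 1)"
    using lead by (simp add: f_def negative_lead_def)
  ultimately show ?thesis
    unfolding eps_def f_def[symmetric] by (meson Max_ge rangeI less_le_trans)
qed

theorem theorem5p10:
  fixes n p q :: nat and m :: int and M1 M2 :: monomial
  assumes "n \<ge> 2"
    and "p \<in> {1..2*n}" and "q \<in> {1..2*n}"
    and "m + max (int p - int n) 0 \<ge> 1 + max (int q - int n) 0"
    and "M1 \<in> Mset n p m" and "M2 \<in> Mset n q 1"
    and "highest_weight n (mono_mult M1 M2)"
  shows "M1 = (if p \<le> n then Y n p m else Y n (2*n - p) (m - int n + int p))"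
proof (rule ccontr)
  assume "\<not> ?thesis"
  then have "M1 \<noteq> top_monomial n p m"
    by (simp add: top_monomial_def)
  moreover have "height n q 1 \<le> height n p m"
    using assms(4) by (simp add: height_def)
  ultimately obtain K i where lead: "negative_lead (mono_mult M1 M2) (K, i)"
    using Mset_mult_negative_lead assms(2,3,5,6) by (metis atLeastAtMost_iff surj_pair)
  then have "M1 i K \<noteq> 0 \<or> M2 i K \<noteq> 0"
    by (auto simp: negative_lead_def)
  then have "i \<in> {1..n}"
    using Mset_eq_zero_outside_rows assms(5,6) by blast
  moreover have "0 < eps (mono_mult M1 M2) i"
  proof (rule eps_pos_if_negative_lead[OF lead])
    fix l
    assume "l < min m 1"
    then show "mono_mult M1 M2 i l = 0"
      using Mset_eq_zero_before[OF assms(5)] Mset_eq_zero_before[OF assms(6)] by simp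
  qed
  ultimately show False
    using assms(7) by (simp add: highest_weight_def)
qed

end
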